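(* There exist absolute constants $c>0$ and $n_0$ with the following property. For any integer $B\ge1$, any $\eta\in(0,1/2)$, any $\epsilon\in(0,1)$ and any $n\ge n_0$, there exist a sequence of $n\times n$ matrices $(A(k))_{k\ge0}$, a positive integer $Q$ (depending on $n$), and an initial vector $x(0)\in\mathbb{R}^n$ whose components are multiples of $1/Q$, such that: each $A(k)$ is doubly stochastic with positive diagonal entries and all positive entries at least $\eta$; for every integer $k\ge0$ the directed graph $(N,\mathcal{E}(A(kB))\cup\cdots\cup\mathcal{E}(A((k+1)B-1)))$ is strongly connected; and under the dynamics $x_i(k+1)=\lfloor\sum_j a_{ij}(k)x_j(k)\rfloor$ (rounding down to the nearest multiple of $1/Q$), whenever $\underline{V}(x(k))/\underline{V}(x(0))\le\epsilon$ we have \[k\ge c\,\frac{n^2}{\eta}\,B\log\frac1\epsilon.\]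
   Context: $N=\{1,\dots,n\}$. A matrix is doubly stochastic if it is nonnegative with all row and column sums equal to $1$. For a matrix $A=[a_{ij}]$, $\mathcal{E}(A)$ is the set of directed edges $(j,i)$ (including self-edges) with $a_{ij}>0$. For $x\in\mathbb{R}^n$, $m(x)=\min_ix_i$ and $\underline{V}(x)=\sum_i(x_i-m(x))^2$. *)

theory Defs
  imports Complex_Main
begin

text \<open>Index set N is rendered as {..<n} (0-based). Matrices are nat \<Rightarrow> nat \<Rightarrow> real,
  entry (i,j) is M i j; vectors are nat \<Rightarrow> real; only indices < n matter.\<close>

definition doubly_stochastic :: "nat \<Rightarrow> (nat \<Rightarrow> nat \<Rightarrow> real) \<Rightarrow> bool" where
  "doubly_stochastic n M \<longleftrightarrow>
     (\<forall>i<n. \<forall>j<n. M i j \<ge> 0) \<and>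
     (\<forall>i<n. (\<Sum>j<n. M i j) = 1) \<and>
     (\<forall>j<n. (\<Sum>i<n. M i j) = 1)"

definition edges :: "nat \<Rightarrow> (nat \<Rightarrow> nat \<Rightarrow> real) \<Rightarrow> (nat \<times> nat) set" where
  "edges n M = {(j, i). i < n \<and> j < n \<and> M i j > 0}"

definition strongly_connected :: "nat \<Rightarrow> (nat \<times> nat) set \<Rightarrow> bool" where
  "strongly_connected n E \<longleftrightarrow> (\<forall>i<n. \<forall>j<n. (i, j) \<in> E\<^sup>*)"

definition minval :: "nat \<Rightarrow> (nat \<Rightarrow> real) \<Rightarrow> real" where
  "minval n x = Min (x ` {..<n})"

definition Vlow :: "nat \<Rightarrow> (nat \<Rightarrow> real) \<Rightarrow> real" where
  "Vlow n x = (\<Sum>i<n. (x i - minval n x)\<^sup>2)"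

definition floorQ :: "nat \<Rightarrow> real \<Rightarrow> real" where
  "floorQ Q y = real_of_int \<lfloor>real Q * y\<rfloor> / real Q"

primrec traj :: "nat \<Rightarrow> nat \<Rightarrow> (nat \<Rightarrow> nat \<Rightarrow> nat \<Rightarrow> real) \<Rightarrow> (nat \<Rightarrow> real) \<Rightarrow> nat \<Rightarrow> nat \<Rightarrow> real" where
  "traj n Q A x0 0 = x0"
| "traj n Q A x0 (Suc k) = (\<lambda>i. floorQ Q (\<Sum>j<n. A k i j * traj n Q A x0 k j))"

end

theory Submission
  imports Defs
begin

text \<open>Averaging with a doubly stochastic matrix never increases \<open>Vlow\<close>, and the rounded
  dynamics stays within \<open>(k+1)/Q\<close> of the exact linear dynamics in every coordinate, hence
  within \<open>O(n k / Q)\<close> of it in \<open>Vlow\<close>. In the slow instance every agent moves the fraction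
  \<open>\<eta>\<close> towards its cyclic predecessor once per block of \<open>B\<close> steps, towards its cyclic successor
  in the next block, and stays put otherwise. The vector \<open>cos (2 \<pi> i / n)\<close> is an eigenvector of
  two consecutive such moves with eigenvalue \<open>1 - 2 \<eta> (1 - \<eta>) (1 - cos (2 \<pi> / n)) = 1 - O(\<eta> / n\<^sup>2)\<close>,
  so from it the exact dynamics needs \<open>\<Omega>(n\<^sup>2 B log(1/\<epsilon>) / \<eta>)\<close> steps to shrink \<open>Vlow\<close> by
  the factor \<open>\<epsilon>\<close>; for \<open>Q\<close> large enough the rounding cannot speed this up.\<close>

definition matvec :: "nat \<Rightarrow> (nat \<Rightarrow> nat \<Rightarrow> real) \<Rightarrow> (nat \<Rightarrow> real) \<Rightarrow> nat \<Rightarrow> real" where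
  "matvec n M z = (\<lambda>i. \<Sum>j<n. M i j * z j)"

definition transpose_mat :: "(nat \<Rightarrow> nat \<Rightarrow> real) \<Rightarrow> nat \<Rightarrow> nat \<Rightarrow> real" where
  "transpose_mat M = (\<lambda>i j. M j i)"

definition id_mat :: "nat \<Rightarrow> nat \<Rightarrow> real" where
  "id_mat i j = (if i = j then 1 else 0)"

primrec lin_traj :: "nat \<Rightarrow> (nat \<Rightarrow> nat \<Rightarrow> nat \<Rightarrow> real) \<Rightarrow> (nat \<Rightarrow> real) \<Rightarrow> nat \<Rightarrow> nat \<Rightarrow> real" where
  "lin_traj n A z 0 = z"
| "lin_traj n A z (Suc k) = matvec n (A k) (lin_traj n A z k)"

lemma matvec_cong: "(\<And>j. j < n \<Longrightarrow> z j = z' j) \<Longrightarrow> matvec n M z = matvec n M z'"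
  unfolding matvec_def by (intro ext sum.cong) auto

lemma matvec_cmult: "matvec n M (\<lambda>i. a * z i) = (\<lambda>i. a * matvec n M z i)"
  unfolding matvec_def by (simp add: sum_distrib_left algebra_simps)

lemma matvec_diff: "matvec n M x i - matvec n M y i = matvec n M (\<lambda>j. x j - y j) i"
  unfolding matvec_def by (simp add: sum_subtractf right_diff_distrib)

lemma matvec_id_mat: "i < n \<Longrightarrow> matvec n id_mat z i = z i"
  unfolding matvec_def id_mat_def by (simp add: if_distrib if_distribR cong: if_cong)

lemma doubly_stochastic_id_mat: "doubly_stochastic n id_mat"
  unfolding doubly_stochastic_def id_mat_def by (auto simp: if_distrib cong: if_cong)

lemma doubly_stochastic_transpose:
  "doubly_stochastic n (transpose_mat M) \<longleftrightarrow> doubly_stochastic n M"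
  unfolding doubly_stochastic_def transpose_mat_def by auto

lemma edges_transpose: "edges n (transpose_mat M) = (edges n M)\<inverse>"
  unfolding edges_def transpose_mat_def by auto

lemma strongly_connected_converse:
  "strongly_connected n (E\<inverse>) \<longleftrightarrow> strongly_connected n E"
  unfolding strongly_connected_def by (metis rtrancl_converseD rtrancl_converseI)

lemma strongly_connected_mono:
  "strongly_connected n E \<Longrightarrow> E \<subseteq> F \<Longrightarrow> strongly_connected n F"
  unfolding strongly_connected_def using rtrancl_mono by blast

lemma matvec_abs_le:
  assumes "doubly_stochastic n M" "i < n" "\<And>j. j < n \<Longrightarrow> \<bar>z j\<bar> \<le> e"
  shows "\<bar>matvec n M z i\<bar> \<le> e"
proof -
  have nonneg: "\<And>j. j < n \<Longrightarrow> 0 \<le> M i j" and row: "(\<Sum>j<n. M i j) = 1"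
    using assms(1,2) unfolding doubly_stochastic_def by auto
  have "\<bar>matvec n M z i\<bar> \<le> (\<Sum>j<n. \<bar>M i j * z j\<bar>)"
    unfolding matvec_def by (rule sum_abs)
  also have "\<dots> \<le> (\<Sum>j<n. M i j * e)"
    using nonneg assms(3) by (intro sum_mono) (auto simp: abs_mult intro: mult_left_mono)
  also have "\<dots> = e"
    using row by (simp add: sum_distrib_right[symmetric])
  finally show ?thesis .
qed

lemma minval_le: "i < n \<Longrightarrow> minval n x \<le> x i"
  unfolding minval_def by (rule Min_le) auto

lemma minval_attained:
  assumes "0 < n" obtains i where "i < n" "x i = minval n x"
proof -
  have "Min (x ` {..<n}) \<in> x ` {..<n}" using assms by (intro Min_in) auto
  then show ?thesis using that unfolding minval_def by auto
qed

lemma minval_cong: "(\<And>i. i < n \<Longrightarrow> x i = y i) \<Longrightarrow> minval n x = minval n y"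
  unfolding minval_def by (metis image_cong lessThan_iff)

lemma Vlow_cong: "(\<And>i. i < n \<Longrightarrow> x i = y i) \<Longrightarrow> Vlow n x = Vlow n y"
  unfolding Vlow_def using minval_cong[of n x y] by (intro sum.cong) auto

lemma minval_cmult:
  assumes "0 \<le> a" "0 < n" shows "minval n (\<lambda>i. a * x i) = a * minval n x"
proof -
  have "mono ((*) a)" using assms by (auto intro: monoI mult_left_mono)
  then have "a * Min (x ` {..<n}) = Min ((*) a ` x ` {..<n})"
    using assms by (intro mono_Min_commute) auto
  then show ?thesis unfolding minval_def by (simp add: image_image)
qed

lemma Vlow_cmult:
  assumes "0 \<le> a" "0 < n" shows "Vlow n (\<lambda>i. a * x i) = a\<^sup>2 * Vlow n x"
  unfolding Vlow_def minval_cmult[OF assms]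
  by (simp add: sum_distrib_left power2_eq_square algebra_simps)

lemma weighted_mean_sq_le:
  fixes w z :: "nat \<Rightarrow> real"
  assumes "\<And>j. j < n \<Longrightarrow> 0 \<le> w j" "(\<Sum>j<n. w j) = 1"
  shows "(\<Sum>j<n. w j * z j)\<^sup>2 \<le> (\<Sum>j<n. w j * (z j)\<^sup>2)"
proof -
  define s where "s = (\<Sum>j<n. w j * z j)"
  have "0 \<le> (\<Sum>j<n. w j * (z j - s)\<^sup>2)" using assms by (intro sum_nonneg) auto
  also have "\<dots> = (\<Sum>j<n. w j * (z j)\<^sup>2 - (2 * s) * (w j * z j) + s\<^sup>2 * w j)"
    by (intro sum.cong) (auto simp: power2_eq_square algebra_simps)
  also have "\<dots> = (\<Sum>j<n. w j * (z j)\<^sup>2) - (2 * s) * s + s\<^sup>2 * (\<Sum>j<n. w j)"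
    unfolding s_def by (simp only: sum.distrib sum_subtractf sum_distrib_left)
  finally show ?thesis using assms(2) unfolding s_def by (simp add: power2_eq_square)
qed

text \<open>The sum of squared distances to the old minimum dominates \<open>Vlow\<close> of the image, and
  Jensen row by row together with the column sums bounds it by \<open>Vlow\<close> of the preimage.\<close>

lemma Vlow_matvec_le:
  assumes ds: "doubly_stochastic n M" and n: "0 < n"
  shows "Vlow n (matvec n M x) \<le> Vlow n x"
proof -
  define m where "m = minval n x"
  define y where "y = matvec n M x"
  have nonneg: "\<And>i j. i < n \<Longrightarrow> j < n \<Longrightarrow> 0 \<le> M i j"
    and row: "\<And>i. i < n \<Longrightarrow> (\<Sum>j<n. M i j) = 1"
    and col: "\<And>j. j < n \<Longrightarrow> (\<Sum>i<n. M i j) = 1"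
    using ds unfolding doubly_stochastic_def by auto
  have y_m: "y i - m = (\<Sum>j<n. M i j * (x j - m))" if "i < n" for i
    using row[OF that] unfolding y_def matvec_def
    by (simp add: right_diff_distrib sum_subtractf sum_distrib_right[symmetric])
  have "m \<le> y i" if "i < n" for i
  proof -
    have "0 \<le> (\<Sum>j<n. M i j * (x j - m))"
      using nonneg that minval_le[of _ n x] unfolding m_def by (intro sum_nonneg) auto
    then show ?thesis using y_m[OF that] by simp
  qed
  then have m_le: "m \<le> minval n y" using minval_attained[OF n, of y] by metis
  have "Vlow n y \<le> (\<Sum>i<n. (y i - m)\<^sup>2)"
    unfolding Vlow_def using m_le minval_le[of _ n y] by (intro sum_mono power_mono) auto
  also have "\<dots> \<le> (\<Sum>i<n. \<Sum>j<n. M i j * (x j - m)\<^sup>2)"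
    using y_m weighted_mean_sq_le[of n "M _"] nonneg row by (intro sum_mono) auto
  also have "\<dots> = (\<Sum>j<n. (\<Sum>i<n. M i j) * (x j - m)\<^sup>2)"
    by (subst sum.swap) (simp add: sum_distrib_right)
  also have "\<dots> = Vlow n x" unfolding Vlow_def m_def using col by simp
  finally show ?thesis unfolding y_def .
qed

lemma minval_perturb:
  assumes "0 < n" "\<And>i. i < n \<Longrightarrow> \<bar>x i - y i\<bar> \<le> e"
  shows "\<bar>minval n x - minval n y\<bar> \<le> e"
proof -
  obtain i where i: "i < n" "x i = minval n x" using minval_attained[OF assms(1)] by blast
  obtain j where j: "j < n" "y j = minval n y" using minval_attained[OF assms(1)] by blast
  have "minval n x \<le> x j" "minval n y \<le> y i" using i j minval_le by auto
  then show ?thesis using assms(2)[OF i(1)] assms(2)[OF j(1)] i j by auto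
qed

lemma abs_sq_diff_le:
  fixes u v e :: real
  assumes "\<bar>u - v\<bar> \<le> 2 * e" "\<bar>v\<bar> \<le> 2" "e \<le> 1"
  shows "\<bar>u\<^sup>2 - v\<^sup>2\<bar> \<le> 12 * e"
proof -
  have "\<bar>u + v\<bar> \<le> 6" using assms by linarith
  then have "\<bar>u - v\<bar> * \<bar>u + v\<bar> \<le> 2 * e * 6"
    using assms(1) by (intro mult_mono) auto
  moreover have "u\<^sup>2 - v\<^sup>2 = (u - v) * (u + v)" by (simp add: power2_eq_square algebra_simps)
  ultimately show ?thesis by (simp add: abs_mult)
qed

lemma Vlow_perturb:
  assumes n: "0 < n" and close: "\<And>i. i < n \<Longrightarrow> \<bar>x i - y i\<bar> \<le> e"
    and y: "\<And>i. i < n \<Longrightarrow> \<bar>y i\<bar> \<le> 1" and e: "e \<le> 1"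
  shows "\<bar>Vlow n x - Vlow n y\<bar> \<le> 12 * real n * e"
proof -
  obtain j where j: "j < n" "y j = minval n y" using minval_attained[OF n] by blast
  have min_close: "\<bar>minval n x - minval n y\<bar> \<le> e" using minval_perturb n close by blast
  have "\<bar>(x i - minval n x)\<^sup>2 - (y i - minval n y)\<^sup>2\<bar> \<le> 12 * e" if i: "i < n" for i
  proof (rule abs_sq_diff_le)
    show "\<bar>(x i - minval n x) - (y i - minval n y)\<bar> \<le> 2 * e"
      using close[OF i] min_close by linarith
    show "\<bar>y i - minval n y\<bar> \<le> 2" using y[OF i] y[OF j(1)] j(2) by linarith
  qed (rule e)
  then have "\<bar>\<Sum>i<n. (x i - minval n x)\<^sup>2 - (y i - minval n y)\<^sup>2\<bar> \<le> (\<Sum>i<n. 12 * e)"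
    by (intro order_trans[OF sum_abs] sum_mono) auto
  then show ?thesis unfolding Vlow_def by (simp add: sum_subtractf)
qed

lemma floorQ_bounds:
  assumes "0 < Q" shows "s - 1 / real Q \<le> floorQ Q s" "floorQ Q s \<le> s"
proof -
  have Q: "0 < real Q" using assms by simp
  have "real Q * s - 1 \<le> real_of_int \<lfloor>real Q * s\<rfloor>" "real_of_int \<lfloor>real Q * s\<rfloor> \<le> real Q * s"
    by linarith+
  then have "(real Q * s - 1) / real Q \<le> floorQ Q s" "floorQ Q s \<le> real Q * s / real Q"
    unfolding floorQ_def using Q by (simp_all only: divide_right_mono less_imp_le)
  then show "s - 1 / real Q \<le> floorQ Q s" "floorQ Q s \<le> s"
    using Q by (simp_all add: diff_divide_distrib)
qed

lemma lin_traj_bounded: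
  assumes "\<And>k. doubly_stochastic n (A k)" "\<And>i. i < n \<Longrightarrow> \<bar>z i\<bar> \<le> 1"
  shows "i < n \<Longrightarrow> \<bar>lin_traj n A z k i\<bar> \<le> 1"
  by (induction k arbitrary: i) (simp_all add: assms matvec_abs_le)

text \<open>Each rounding step adds at most \<open>1/Q\<close> to the sup-distance, which averaging does not increase.\<close>

lemma traj_lin_traj_close:
  assumes Q: "0 < Q" and ds: "\<And>k. doubly_stochastic n (A k)"
    and x0: "\<And>i. i < n \<Longrightarrow> \<bar>x0 i - z i\<bar> \<le> 1 / real Q"
  shows "i < n \<Longrightarrow> \<bar>traj n Q A x0 k i - lin_traj n A z k i\<bar> \<le> (real k + 1) / real Q"
proof (induction k arbitrary: i)
  case 0 then show ?case using x0 by simp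
next
  case (Suc k)
  define s where "s = matvec n (A k) (traj n Q A x0 k) i"
  define t where "t = matvec n (A k) (lin_traj n A z k) i"
  have "\<bar>s - t\<bar> \<le> (real k + 1) / real Q"
    unfolding s_def t_def matvec_diff using ds Suc by (intro matvec_abs_le) auto
  moreover have "s - 1 / real Q \<le> floorQ Q s" "floorQ Q s \<le> s" using floorQ_bounds[OF Q] by auto
  moreover have "traj n Q A x0 (Suc k) i = floorQ Q s" by (simp add: s_def matvec_def)
  ultimately show ?case by (simp add: t_def abs_le_iff add_divide_distrib)
qed

lemma Vlow_traj_close:
  assumes n: "0 < n" and Q: "real k + 1 \<le> real Q" and ds: "\<And>k. doubly_stochastic n (A k)"
    and z: "\<And>i. i < n \<Longrightarrow> \<bar>z i\<bar> \<le> 1" and x0: "\<And>i. i < n \<Longrightarrow> \<bar>x0 i - z i\<bar> \<le> 1 / real Q"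
  shows "\<bar>Vlow n (traj n Q A x0 k) - Vlow n (lin_traj n A z k)\<bar> \<le> 12 * real n * ((real k + 1) / real Q)"
proof (rule Vlow_perturb[OF n])
  have "0 < Q" using Q by linarith
  then show "\<And>i. i < n \<Longrightarrow> \<bar>traj n Q A x0 k i - lin_traj n A z k i\<bar> \<le> (real k + 1) / real Q"
    using traj_lin_traj_close ds x0 by blast
  show "\<And>i. i < n \<Longrightarrow> \<bar>lin_traj n A z k i\<bar> \<le> 1" using lin_traj_bounded[OF ds z] .
  show "(real k + 1) / real Q \<le> 1" using Q by simp
qed

definition cyc_pred :: "nat \<Rightarrow> nat \<Rightarrow> nat" where
  "cyc_pred n i = (i + n - 1) mod n"

definition cyc_succ :: "nat \<Rightarrow> nat \<Rightarrow> nat" where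
  "cyc_succ n i = Suc i mod n"

lemma cyc_pred_eq: "i < n \<Longrightarrow> cyc_pred n i = (if i = 0 then n - 1 else i - 1)"
proof (cases "i = 0")
  case False
  assume "i < n"
  have "i + n - 1 = (i - 1) + n" using False by simp
  then have "cyc_pred n i = ((i - 1) + n) mod n" by (simp add: cyc_pred_def)
  also have "\<dots> = i - 1" using \<open>i < n\<close> by simp
  finally show ?thesis using False by simp
qed (simp add: cyc_pred_def)

lemma cyc_succ_eq: "i < n \<Longrightarrow> cyc_succ n i = (if i = n - 1 then 0 else i + 1)"
  by (auto simp: cyc_succ_def)

lemma cyc_pred_less: "i < n \<Longrightarrow> cyc_pred n i < n"
  by (simp add: cyc_pred_def)

lemma cyc_succ_less: "i < n \<Longrightarrow> cyc_succ n i < n"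
  by (simp add: cyc_succ_def)

lemma cyc_pred_eq_iff: "i < n \<Longrightarrow> j < n \<Longrightarrow> j = cyc_pred n i \<longleftrightarrow> i = cyc_succ n j"
  by (auto simp: cyc_pred_eq cyc_succ_eq)

lemma cyc_pred_cyc_succ: "i < n \<Longrightarrow> cyc_pred n (cyc_succ n i) = i"
  using cyc_pred_eq_iff[of "cyc_succ n i" n i] cyc_succ_less by auto

lemma cyc_succ_neq: "2 \<le> n \<Longrightarrow> i < n \<Longrightarrow> cyc_succ n i \<noteq> i"
  by (simp add: cyc_succ_eq)

lemma rtrancl_cyc_succ:
  assumes E: "\<And>j. j < n \<Longrightarrow> (j, cyc_succ n j) \<in> E" and i: "i < n"
  shows "(i, (i + d) mod n) \<in> E\<^sup>*"
proof (induction d)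
  case (Suc d)
  have "((i + d) mod n, cyc_succ n ((i + d) mod n)) \<in> E" using E i by simp
  moreover have "cyc_succ n ((i + d) mod n) = (i + Suc d) mod n"
    unfolding cyc_succ_def by (simp add: mod_Suc_eq)
  ultimately show ?case using Suc.IH by (metis rtrancl.rtrancl_into_rtrancl)
qed (use i in simp)

lemma strongly_connected_cyc_succ:
  assumes "\<And>j. j < n \<Longrightarrow> (j, cyc_succ n j) \<in> E" shows "strongly_connected n E"
  unfolding strongly_connected_def
proof (intro allI impI)
  fix i j assume "i < n" "j < n"
  then have "(i + (j + n - i)) mod n = j" by simp
  then show "(i, j) \<in> E\<^sup>*" using rtrancl_cyc_succ[OF assms \<open>i < n\<close>, of "j + n - i"] by simp
qed

definition lazy_rot :: "nat \<Rightarrow> real \<Rightarrow> nat \<Rightarrow> nat \<Rightarrow> real" where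
  "lazy_rot n r i j = (if j = i then 1 - r else 0) + (if j = cyc_pred n i then r else 0)"

lemma matvec_lazy_rot:
  assumes "i < n" shows "matvec n (lazy_rot n r) z i = (1 - r) * z i + r * z (cyc_pred n i)"
proof -
  have "matvec n (lazy_rot n r) z i
      = (\<Sum>j<n. (if j = i then (1 - r) * z j else 0) + (if j = cyc_pred n i then r * z j else 0))"
    unfolding matvec_def lazy_rot_def by (rule sum.cong) (auto simp: distrib_right)
  then show ?thesis using assms cyc_pred_less[OF assms] by (simp add: sum.distrib)
qed

lemma matvec_transpose_lazy_rot:
  assumes "i < n"
  shows "matvec n (transpose_mat (lazy_rot n r)) z i = (1 - r) * z i + r * z (cyc_succ n i)"
proof -
  have "matvec n (transpose_mat (lazy_rot n r)) z i
      = (\<Sum>j<n. (if j = i then (1 - r) * z j else 0) + (if j = cyc_succ n i then r * z j else 0))"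
    unfolding matvec_def transpose_mat_def lazy_rot_def using assms
    by (intro sum.cong) (auto simp: distrib_right cyc_pred_eq_iff)
  then show ?thesis using assms cyc_succ_less[OF assms] by (simp add: sum.distrib)
qed

lemma doubly_stochastic_lazy_rot:
  assumes "0 \<le> r" "r \<le> 1" shows "doubly_stochastic n (lazy_rot n r)"
proof -
  have row: "(\<Sum>j<n. lazy_rot n r i j) = 1" if "i < n" for i
    using that cyc_pred_less[OF that] by (simp add: lazy_rot_def sum.distrib)
  have col: "(\<Sum>i<n. lazy_rot n r i j) = 1" if "j < n" for j
  proof -
    have "(\<Sum>i<n. lazy_rot n r i j)
        = (\<Sum>i<n. (if j = i then 1 - r else 0) + (if i = cyc_succ n j then r else 0))"
      unfolding lazy_rot_def using that by (intro sum.cong) (auto simp: cyc_pred_eq_iff)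
    then show ?thesis using that cyc_succ_less[OF that] by (simp add: sum.distrib)
  qed
  show ?thesis using assms row col unfolding doubly_stochastic_def by (auto simp: lazy_rot_def)
qed

lemma lazy_rot_diag_pos: "r < 1 \<Longrightarrow> 0 \<le> r \<Longrightarrow> 0 < lazy_rot n r i i"
  unfolding lazy_rot_def by simp

lemma lazy_rot_pos_ge: "0 \<le> r \<Longrightarrow> r \<le> 1 / 2 \<Longrightarrow> 0 < lazy_rot n r i j \<Longrightarrow> r \<le> lazy_rot n r i j"
  unfolding lazy_rot_def by (auto split: if_splits)

lemma strongly_connected_lazy_rot:
  assumes "2 \<le> n" "0 < r" shows "strongly_connected n (edges n (lazy_rot n r))"
proof (rule strongly_connected_cyc_succ)
  fix j assume j: "j < n"
  have "lazy_rot n r (cyc_succ n j) j = r"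
    unfolding lazy_rot_def using cyc_succ_neq[OF assms(1) j] cyc_pred_cyc_succ[OF j] by simp
  then show "(j, cyc_succ n j) \<in> edges n (lazy_rot n r)"
    unfolding edges_def using j cyc_succ_less[OF j] assms(2) by auto
qed


definition cos_mode :: "nat \<Rightarrow> nat \<Rightarrow> real" where
  "cos_mode n i = cos (2 * pi * real i / real n)"

definition mode_factor :: "nat \<Rightarrow> real \<Rightarrow> real" where
  "mode_factor n r = 1 - 2 * r * (1 - r) * (1 - cos (2 * pi / real n))"

lemma cos_mode_cyc_pred:
  assumes "2 \<le> n" "i < n"
  shows "cos_mode n (cyc_pred n i) = cos (2 * pi * real i / real n - 2 * pi / real n)"
proof (cases "i = 0")
  case True
  have "2 * pi * real (n - 1) / real n = 2 * pi - 2 * pi / real n"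
    using assms by (simp add: of_nat_diff field_simps)
  then show ?thesis using True assms by (simp add: cyc_pred_eq cos_mode_def cos_diff)
next
  case False
  have "2 * pi * real (i - 1) / real n = 2 * pi * real i / real n - 2 * pi / real n"
    using False by (simp add: of_nat_diff algebra_simps diff_divide_distrib)
  then show ?thesis using False assms by (simp add: cyc_pred_eq cos_mode_def)
qed

lemma cos_mode_cyc_succ:
  assumes "2 \<le> n" "i < n"
  shows "cos_mode n (cyc_succ n i) = cos (2 * pi * real i / real n + 2 * pi / real n)"
proof (cases "i = n - 1")
  case True
  have "2 * pi * real i / real n + 2 * pi / real n = 2 * pi"
    using assms True by (simp add: of_nat_diff field_simps)
  then show ?thesis using True assms by (simp add: cyc_succ_eq cos_mode_def)
next
  case False
  have "2 * pi * real (i + 1) / real n = 2 * pi * real i / real n + 2 * pi / real n"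
    by (simp add: algebra_simps add_divide_distrib)
  then show ?thesis using False assms by (simp add: cyc_succ_eq cos_mode_def)
qed

text \<open>The two lazy rotations are diagonalised by the Fourier basis; on the slowest mode
  their product acts by \<open>(1 - r + r e^{-i\<theta>})(1 - r + r e^{i\<theta>}) = mode_factor n r\<close>.\<close>

lemma cos_mode_eigen:
  assumes "2 \<le> n" "i < n"
  shows "matvec n (transpose_mat (lazy_rot n r)) (matvec n (lazy_rot n r) (cos_mode n)) i
    = mode_factor n r * cos_mode n i"
proof -
  define t where "t = 2 * pi * real i / real n"
  define p where "p = 2 * pi / real n"
  have succ_i: "cyc_succ n i < n" "cyc_pred n (cyc_succ n i) = i"
    using cyc_succ_less cyc_pred_cyc_succ assms(2) by auto
  have "matvec n (lazy_rot n r) (cos_mode n) i = (1 - r) * cos t + r * cos (t - p)"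
    using matvec_lazy_rot[OF assms(2)] cos_mode_cyc_pred[OF assms]
    unfolding t_def p_def cos_mode_def by simp
  moreover have "matvec n (lazy_rot n r) (cos_mode n) (cyc_succ n i) = (1 - r) * cos (t + p) + r * cos t"
    using matvec_lazy_rot[OF succ_i(1)] cos_mode_cyc_succ[OF assms] succ_i(2)
    unfolding t_def p_def cos_mode_def by simp
  ultimately have "matvec n (transpose_mat (lazy_rot n r)) (matvec n (lazy_rot n r) (cos_mode n)) i
      = (1 - r) * ((1 - r) * cos t + r * cos (t - p)) + r * ((1 - r) * cos (t + p) + r * cos t)"
    using matvec_transpose_lazy_rot[OF assms(2)] by simp
  also have "\<dots> = mode_factor n r * cos t"
    unfolding mode_factor_def p_def[symmetric] by (simp add: cos_add cos_diff algebra_simps)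
  finally show ?thesis unfolding t_def cos_mode_def .
qed

definition rot_step :: "nat \<Rightarrow> real \<Rightarrow> nat \<Rightarrow> nat \<Rightarrow> nat \<Rightarrow> real" where
  "rot_step n r J = (if even J then lazy_rot n r else transpose_mat (lazy_rot n r))"

lemma doubly_stochastic_rot_step:
  "0 \<le> r \<Longrightarrow> r \<le> 1 \<Longrightarrow> doubly_stochastic n (rot_step n r J)"
  unfolding rot_step_def by (simp add: doubly_stochastic_lazy_rot doubly_stochastic_transpose)

lemma rot_step_diag_pos: "0 \<le> r \<Longrightarrow> r < 1 \<Longrightarrow> 0 < rot_step n r J i i"
  by (simp add: rot_step_def transpose_mat_def lazy_rot_diag_pos)

lemma rot_step_pos_ge: "0 \<le> r \<Longrightarrow> r \<le> 1 / 2 \<Longrightarrow> 0 < rot_step n r J i j \<Longrightarrow> r \<le> rot_step n r J i j"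
  unfolding rot_step_def transpose_mat_def using lazy_rot_pos_ge by (cases "even J") auto

lemma lin_traj_rot_step_even:
  assumes "2 \<le> n"
  shows "i < n \<Longrightarrow> lin_traj n (rot_step n r) (cos_mode n) (2 * q) i = mode_factor n r ^ q * cos_mode n i"
proof (induction q arbitrary: i)
  case (Suc q)
  let ?z = "lin_traj n (rot_step n r) (cos_mode n) (2 * q)"
  have "matvec n (lazy_rot n r) ?z = matvec n (lazy_rot n r) (\<lambda>i. mode_factor n r ^ q * cos_mode n i)"
    using Suc.IH by (intro matvec_cong) auto
  then have "lin_traj n (rot_step n r) (cos_mode n) (2 * Suc q)
      = (\<lambda>i. mode_factor n r ^ q
             * matvec n (transpose_mat (lazy_rot n r)) (matvec n (lazy_rot n r) (cos_mode n)) i)"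
    by (simp add: rot_step_def matvec_cmult)
  then show ?case using cos_mode_eigen[OF assms Suc.prems] by simp
qed simp

text \<open>An odd number of moves is bounded through the next even number, since one more move
  cannot increase \<open>Vlow\<close>.\<close>

lemma Vlow_lin_traj_rot_step_ge:
  assumes n: "2 \<le> n" and r: "0 \<le> r" "r \<le> 1" and mf: "0 \<le> mode_factor n r"
  shows "mode_factor n r ^ (2 * ((J + 1) div 2)) * Vlow n (cos_mode n)
    \<le> Vlow n (lin_traj n (rot_step n r) (cos_mode n) J)"
proof -
  have even_case: "Vlow n (lin_traj n (rot_step n r) (cos_mode n) (2 * q))
      = mode_factor n r ^ (2 * q) * Vlow n (cos_mode n)" for q
  proof -
    have "Vlow n (lin_traj n (rot_step n r) (cos_mode n) (2 * q))
        = Vlow n (\<lambda>i. mode_factor n r ^ q * cos_mode n i)"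
      by (rule Vlow_cong) (use lin_traj_rot_step_even[OF n] in auto)
    also have "\<dots> = (mode_factor n r ^ q)\<^sup>2 * Vlow n (cos_mode n)"
      using mf n by (intro Vlow_cmult) auto
    finally show ?thesis by (simp add: power_mult[symmetric] mult.commute)
  qed
  show ?thesis
  proof (cases "even J")
    case True
    then show ?thesis using even_case by (elim evenE) simp
  next
    case False
    then obtain q where J: "J = 2 * q + 1" using oddE by blast
    have "lin_traj n (rot_step n r) (cos_mode n) (2 * (q + 1))
        = matvec n (rot_step n r J) (lin_traj n (rot_step n r) (cos_mode n) J)"
      using J by simp
    then have "Vlow n (lin_traj n (rot_step n r) (cos_mode n) (2 * (q + 1)))
        \<le> Vlow n (lin_traj n (rot_step n r) (cos_mode n) J)"
      using Vlow_matvec_le[OF doubly_stochastic_rot_step[OF r]] n by simp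
    then show ?thesis using even_case[of "q + 1"] J by simp
  qed
qed

definition slow_schedule :: "nat \<Rightarrow> real \<Rightarrow> nat \<Rightarrow> nat \<Rightarrow> nat \<Rightarrow> nat \<Rightarrow> real" where
  "slow_schedule n r B t = (if t mod B = B - 1 then rot_step n r (t div B) else id_mat)"

lemma lin_traj_slow_schedule:
  assumes B: "1 \<le> B"
  shows "i < n \<Longrightarrow> lin_traj n (slow_schedule n r B) z k i = lin_traj n (rot_step n r) z (k div B) i"
proof (induction k arbitrary: i)
  case (Suc k)
  have "lin_traj n (slow_schedule n r B) z (Suc k)
      = matvec n (slow_schedule n r B k) (lin_traj n (rot_step n r) z (k div B))"
    using Suc.IH by (auto intro: matvec_cong)
  then have "lin_traj n (slow_schedule n r B) z (Suc k) i
      = matvec n (slow_schedule n r B k) (lin_traj n (rot_step n r) z (k div B)) i"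
    by simp
  also have "\<dots> = lin_traj n (rot_step n r) z (Suc k div B) i"
  proof (cases "k mod B = B - 1")
    case True
    then have "Suc k div B = Suc (k div B)" using B by (simp add: div_Suc mod_Suc)
    then show ?thesis using True by (simp add: slow_schedule_def)
  next
    case False
    then have "Suc k div B = k div B" using B by (auto simp: div_Suc mod_Suc)
    then show ?thesis using False Suc.prems by (simp add: slow_schedule_def matvec_id_mat)
  qed
  finally show ?case .
qed simp

lemma slow_schedule_props:
  assumes n: "2 \<le> n" and r: "0 < r" "r \<le> 1 / 2" and B: "1 \<le> B"
  shows "doubly_stochastic n (slow_schedule n r B t)"
    and "0 < slow_schedule n r B t i i"
    and "0 < slow_schedule n r B t i j \<Longrightarrow> r \<le> slow_schedule n r B t i j"
    and "strongly_connected n (\<Union>t\<in>{k*B..<(k+1)*B}. edges n (slow_schedule n r B t))"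
proof -
  show "doubly_stochastic n (slow_schedule n r B t)"
    using r doubly_stochastic_rot_step doubly_stochastic_id_mat unfolding slow_schedule_def by auto
  show "0 < slow_schedule n r B t i i"
    using r rot_step_diag_pos[of r n] by (simp add: slow_schedule_def id_mat_def)
  show "r \<le> slow_schedule n r B t i j" if "0 < slow_schedule n r B t i j"
    using that r rot_step_pos_ge[of r n] by (cases "t mod B = B - 1") (auto simp: slow_schedule_def id_mat_def split: if_split_asm)
  define t0 where "t0 = (B - 1) + k * B"
  have "t0 mod B = (B - 1) mod B" unfolding t0_def by (rule mod_mult_self1)
  moreover have "t0 div B = k + (B - 1) div B" unfolding t0_def using B by (intro div_mult_self1) simp
  ultimately have t0: "t0 \<in> {k*B..<(k+1)*B}" "t0 mod B = B - 1" "t0 div B = k"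
    unfolding t0_def using B by auto
  have "strongly_connected n (edges n (rot_step n r k))"
    using strongly_connected_lazy_rot[OF n r(1)]
    by (simp add: rot_step_def edges_transpose strongly_connected_converse)
  then have "strongly_connected n (edges n (slow_schedule n r B t0))"
    using t0 by (simp add: slow_schedule_def)
  then show "strongly_connected n (\<Union>t\<in>{k*B..<(k+1)*B}. edges n (slow_schedule n r B t))"
    by (rule strongly_connected_mono) (use t0 in blast)
qed

lemma Vlow_lin_traj_slow_schedule_ge:
  assumes n: "2 \<le> n" and r: "0 \<le> r" "r \<le> 1" and mf: "0 \<le> mode_factor n r" and B: "1 \<le> B"
  shows "mode_factor n r ^ (2 * ((k div B + 1) div 2)) * Vlow n (cos_mode n)
    \<le> Vlow n (lin_traj n (slow_schedule n r B) (cos_mode n) k)"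
proof -
  have "Vlow n (lin_traj n (slow_schedule n r B) (cos_mode n) k)
      = Vlow n (lin_traj n (rot_step n r) (cos_mode n) (k div B))"
    by (rule Vlow_cong) (rule lin_traj_slow_schedule[OF B])
  then show ?thesis using Vlow_lin_traj_rot_step_ge[OF n r mf] by simp
qed

lemma abs_cos_mode_le: "\<bar>cos_mode n i\<bar> \<le> 1"
  unfolding cos_mode_def by simp

lemma Vlow_cos_mode_pos:
  assumes "2 \<le> n" shows "0 < Vlow n (cos_mode n)"
proof -
  have "cos (2 * pi / real n) < cos 0"
    using assms by (intro cos_monotone_0_pi) (auto simp: field_simps)
  then have "cos_mode n 1 < cos_mode n 0" unfolding cos_mode_def by simp
  moreover have "minval n (cos_mode n) \<le> cos_mode n 1" using assms by (intro minval_le) auto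
  ultimately have "0 < (cos_mode n 0 - minval n (cos_mode n))\<^sup>2" by simp
  also have "\<dots> \<le> Vlow n (cos_mode n)"
    unfolding Vlow_def using assms
    by (intro member_le_sum[of 0 "{..<n}" "\<lambda>i. (cos_mode n i - minval n (cos_mode n))\<^sup>2"]) auto
  finally show ?thesis .
qed

lemma one_minus_cos_le: "1 - cos (2 * pi / real n) \<le> 32 / (real n)\<^sup>2"
proof -
  define w where "w = pi / real n"
  have "sin w ^ 2 \<le> w ^ 2" using abs_sin_x_le_abs_x[of w] by (simp add: abs_le_square_iff)
  then have "1 - cos (2 * w) \<le> 2 * w ^ 2" by (simp add: cos_double_sin)
  moreover have "pi ^ 2 \<le> 4 ^ 2" using pi_less_4 by (intro power_mono) auto
  then have "2 * w ^ 2 \<le> 32 / (real n)\<^sup>2"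
    unfolding w_def by (simp add: power_divide divide_right_mono)
  ultimately show ?thesis unfolding w_def by simp
qed

lemma one_minus_mode_factor_le:
  assumes "0 \<le> r" "r \<le> 1"
  shows "0 \<le> 1 - mode_factor n r" "1 - mode_factor n r \<le> 64 * r / (real n)\<^sup>2"
proof -
  have "1 - mode_factor n r = 2 * r * (1 - r) * (1 - cos (2 * pi / real n))"
    unfolding mode_factor_def by simp
  moreover have "2 * r * (1 - r) * (1 - cos (2 * pi / real n)) \<le> 2 * r * 1 * (32 / (real n)\<^sup>2)"
    using assms one_minus_cos_le by (intro mult_mono) auto
  ultimately show "0 \<le> 1 - mode_factor n r" "1 - mode_factor n r \<le> 64 * r / (real n)\<^sup>2"
    using assms by auto
qed

lemma mode_factor_bounds:
  assumes n: "10 \<le> n" and r: "0 < r" "r < 1/2"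
  shows "17/25 \<le> mode_factor n r" "ln (1 / mode_factor n r) \<le> 100 * r / (real n)\<^sup>2"
proof -
  have gap: "0 \<le> 1 - mode_factor n r" "1 - mode_factor n r \<le> 64 * r / (real n)\<^sup>2"
    using one_minus_mode_factor_le r by auto
  have "10 ^ 2 \<le> (real n)\<^sup>2" using n by (intro power_mono) auto
  then have "64 * r / (real n)\<^sup>2 \<le> 64 * r / 100" using r n by (intro divide_left_mono) auto
  then show mf: "17/25 \<le> mode_factor n r" using gap r by linarith
  have "ln (1 / mode_factor n r) \<le> 1 / mode_factor n r - 1" using mf by (intro ln_le_minus_one) auto
  also have "\<dots> = (1 - mode_factor n r) / mode_factor n r" using mf by (simp add: field_simps)
  also have "\<dots> \<le> (64 * r / (real n)\<^sup>2) / (17/25)" using mf gap by (intro frac_le) auto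
  also have "\<dots> = (1600 / 17) * (r / (real n)\<^sup>2)" by simp
  also have "\<dots> \<le> 100 * (r / (real n)\<^sup>2)" using r by (intro mult_right_mono) auto
  finally show "ln (1 / mode_factor n r) \<le> 100 * r / (real n)\<^sup>2" by simp
qed

lemma slow_schedule_decay_time:
  assumes n: "10 \<le> n" and B: "1 \<le> B" and \<eta>: "0 < \<eta>" "\<eta> < 1/2" and \<epsilon>: "0 < \<epsilon>" "\<epsilon> < 1"
    and decayed: "mode_factor n \<eta> ^ (2 * ((k div B + 1) div 2)) \<le> sqrt \<epsilon>"
  shows "1/400 * (real n)\<^sup>2 / \<eta> * real B * ln (1/\<epsilon>) \<le> real k"
proof -
  define p where "p = (k div B + 1) div 2"
  define \<mu> where "\<mu> = mode_factor n \<eta>"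
  have \<mu>: "17/25 \<le> \<mu>" "ln (1 / \<mu>) \<le> 100 * \<eta> / (real n)\<^sup>2"
    unfolding \<mu>_def using mode_factor_bounds[OF n \<eta>] by auto
  have "ln (\<mu> ^ (2 * p)) \<le> ln (sqrt \<epsilon>)"
    using decayed \<mu> \<epsilon> unfolding p_def \<mu>_def by (subst ln_le_cancel_iff) auto
  then have "real (2 * p) * ln \<mu> \<le> ln \<epsilon> / 2"
    using \<mu> \<epsilon> by (simp add: ln_realpow ln_sqrt)
  then have "ln (1/\<epsilon>) \<le> 4 * real p * ln (1 / \<mu>)"
    using \<mu> \<epsilon> by (simp add: ln_div)
  also have "\<dots> \<le> 4 * real p * (100 * \<eta> / (real n)\<^sup>2)" using \<mu> by (intro mult_left_mono) auto
  finally have "1/400 * (real n)\<^sup>2 / \<eta> * ln (1/\<epsilon>) \<le> real p"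
    using \<eta> n by (simp add: field_simps)
  then have "real B * (1/400 * (real n)\<^sup>2 / \<eta> * ln (1/\<epsilon>)) \<le> real B * real p"
    by (rule mult_left_mono) simp
  then have "1/400 * (real n)\<^sup>2 / \<eta> * real B * ln (1/\<epsilon>) \<le> real B * real p"
    by (simp add: algebra_simps)
  also have "real B * real p \<le> real k"
  proof -
    have "p \<le> k div B" unfolding p_def by linarith
    then have "B * p \<le> B * (k div B)" by simp
    also have "\<dots> \<le> k" by simp
    finally show ?thesis by (metis of_nat_le_iff of_nat_mult)
  qed
  finally show ?thesis .
qed

lemma less_sqrt_self: "0 < x \<Longrightarrow> x < 1 \<Longrightarrow> x < sqrt (x::real)"
  by (intro real_less_rsqrt) (simp add: power2_eq_square mult_less_cancel_left1)

text \<open>The condition on \<open>Q\<close> keeps the rounding error \<open>D\<close> in \<open>Vlow\<close> up to time \<open>T\<close> below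
  \<open>(\<surd>\<epsilon> - \<epsilon>) Vlow(cos_mode) / 2\<close>, so reaching \<open>\<epsilon> Vlow(x(0))\<close> before time \<open>T\<close> would force
  the exact dynamics below \<open>\<surd>\<epsilon> Vlow(cos_mode)\<close>.\<close>

lemma slow_schedule_lower_bound:
  fixes \<eta> \<epsilon> :: real and n B Q :: nat
  defines "T \<equiv> 1/400 * (real n)\<^sup>2 / \<eta> * real B * ln (1/\<epsilon>)"
    and "x0 \<equiv> \<lambda>i. floorQ Q (cos_mode n i)"
  assumes n: "10 \<le> n" and B: "1 \<le> B" and \<eta>: "0 < \<eta>" "\<eta> < 1/2" and \<epsilon>: "0 < \<epsilon>" "\<epsilon> < 1"
    and Q_ge: "T + 2 \<le> real Q"
    and Q_fine: "24 * real n * (T + 2) \<le> real Q * Vlow n (cos_mode n) * (sqrt \<epsilon> - \<epsilon>)"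
  shows "0 < Vlow n x0"
    and "Vlow n (traj n Q (slow_schedule n \<eta> B) x0 k) \<le> \<epsilon> * Vlow n x0 \<Longrightarrow> T \<le> real k"
proof -
  let ?A = "slow_schedule n \<eta> B"
  define W where "W = Vlow n (cos_mode n)"
  define D where "D = 12 * real n * (T + 2) / real Q"
  have n2: "2 \<le> n" and n0: "0 < n" using n by auto
  have W0: "0 < W" unfolding W_def using Vlow_cos_mode_pos[OF n2] .
  have T0: "0 \<le> T" unfolding T_def using \<eta> \<epsilon> by simp
  have Q0: "0 < Q" using Q_ge T0 by linarith
  have ds: "\<And>t. doubly_stochastic n (?A t)" using slow_schedule_props(1)[OF n2 \<eta>(1) _ B] \<eta> by simp
  have x0_close: "\<bar>x0 i - cos_mode n i\<bar> \<le> 1 / real Q" for i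
    unfolding x0_def using floorQ_bounds[OF Q0, of "cos_mode n i"] by (simp add: abs_le_iff)
  have close: "\<bar>Vlow n (traj n Q ?A x0 k) - Vlow n (lin_traj n ?A (cos_mode n) k)\<bar> \<le> D"
    if "real k \<le> T + 1" for k
  proof -
    have "real k + 1 \<le> real Q" using that Q_ge by linarith
    then have "\<bar>Vlow n (traj n Q ?A x0 k) - Vlow n (lin_traj n ?A (cos_mode n) k)\<bar>
        \<le> 12 * real n * ((real k + 1) / real Q)"
      by (rule Vlow_traj_close[OF n0 _ ds]) (simp_all add: abs_cos_mode_le x0_close)
    also have "\<dots> \<le> 12 * real n * ((T + 2) / real Q)"
      using that Q0 by (intro mult_left_mono divide_right_mono) auto
    also have "\<dots> = D" unfolding D_def by simp
    finally show ?thesis .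
  qed
  have D0: "0 \<le> D" unfolding D_def using T0 by simp
  have D_small: "2 * D \<le> W * (sqrt \<epsilon> - \<epsilon>)"
    using Q_fine Q0 unfolding D_def W_def by (simp add: field_simps)
  have sqrt_\<epsilon>: "\<epsilon> < sqrt \<epsilon>" "sqrt \<epsilon> < 1" using less_sqrt_self \<epsilon> by auto
  have x0_W: "\<bar>Vlow n x0 - W\<bar> \<le> D" using close[of 0] T0 by (simp add: W_def)
  have "sqrt \<epsilon> - \<epsilon> < 1" using sqrt_\<epsilon> \<epsilon> by linarith
  then have "W * (sqrt \<epsilon> - \<epsilon>) < W * 1" using W0 by (intro mult_strict_left_mono)
  then show "0 < Vlow n x0" using x0_W D_small D0 by linarith
  show "T \<le> real k" if small: "Vlow n (traj n Q ?A x0 k) \<le> \<epsilon> * Vlow n x0"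
  proof (rule ccontr)
    assume "\<not> T \<le> real k"
    then have k: "real k \<le> T + 1" by simp
    have "0 \<le> mode_factor n \<eta>" using mode_factor_bounds(1)[OF n \<eta>] by simp
    then have "mode_factor n \<eta> ^ (2 * ((k div B + 1) div 2)) * W \<le> Vlow n (lin_traj n ?A (cos_mode n) k)"
      unfolding W_def using Vlow_lin_traj_slow_schedule_ge[OF n2 _ _ _ B] \<eta> by simp
    also have "\<dots> \<le> \<epsilon> * Vlow n x0 + D"
      using close[OF k] small by linarith
    also have "\<dots> \<le> \<epsilon> * (W + D) + D"
      using x0_W \<epsilon> by (intro add_right_mono mult_left_mono) auto
    also have "\<dots> \<le> \<epsilon> * W + 2 * D"
      using mult_left_le_one_le[OF D0, of \<epsilon>] \<epsilon> by (simp add: distrib_left)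
    also have "\<dots> \<le> sqrt \<epsilon> * W"
      using D_small by (simp add: algebra_simps)
    finally have "mode_factor n \<eta> ^ (2 * ((k div B + 1) div 2)) \<le> sqrt \<epsilon>" using W0 by simp
    then have "T \<le> real k" unfolding T_def by (rule slow_schedule_decay_time[OF n B \<eta> \<epsilon>])
    with \<open>\<not> T \<le> real k\<close> show False ..
  qed
qed

lemma slow_instance:
  fixes B :: nat and \<eta> \<epsilon> :: real and n :: nat
  assumes B: "B \<ge> 1" and \<eta>: "0 < \<eta>" "\<eta> < 1/2" and \<epsilon>: "0 < \<epsilon>" "\<epsilon> < 1" and n: "n \<ge> 10"
  shows "\<exists>(A::nat \<Rightarrow> nat \<Rightarrow> nat \<Rightarrow> real) (Q::nat) (x0::nat \<Rightarrow> real).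
         Q > 0 \<and>
         (\<forall>i<n. \<exists>m::int. x0 i = real_of_int m / real Q) \<and>
         (\<forall>k. doubly_stochastic n (A k)) \<and>
         (\<forall>k. \<forall>i<n. A k i i > 0) \<and>
         (\<forall>k. \<forall>i<n. \<forall>j<n. A k i j > 0 \<longrightarrow> A k i j \<ge> \<eta>) \<and>
         (\<forall>k. strongly_connected n (\<Union>t\<in>{k*B..<(k+1)*B}. edges n (A t))) \<and>
         Vlow n x0 > 0 \<and>
         (\<forall>k. Vlow n (traj n Q A x0 k) / Vlow n x0 \<le> \<epsilon> \<longrightarrow>
              real k \<ge> 1/400 * (real n)\<^sup>2 / \<eta> * real B * ln (1/\<epsilon>))"
proof -
  define T where "T = 1/400 * (real n)\<^sup>2 / \<eta> * real B * ln (1/\<epsilon>)"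
  define gap where "gap = Vlow n (cos_mode n) * (sqrt \<epsilon> - \<epsilon>)"
  define Q where "Q = nat \<lceil>(T + 2) * (1 + 24 * real n / gap)\<rceil>"
  define x0 where "x0 = (\<lambda>i. floorQ Q (cos_mode n i))"
  have n2: "2 \<le> n" using n by simp
  have T0: "0 \<le> T" unfolding T_def using \<eta> \<epsilon> by simp
  have gap0: "0 < gap"
    unfolding gap_def using Vlow_cos_mode_pos[OF n2] less_sqrt_self \<epsilon> by simp
  have Q_ceil: "(T + 2) * (1 + 24 * real n / gap) \<le> real Q"
    unfolding Q_def by linarith
  have "T + 2 \<le> (T + 2) * (1 + 24 * real n / gap)"
    using T0 gap0 by (intro mult_le_cancel_left1[THEN iffD2]) auto
  with Q_ceil have Q_ge: "T + 2 \<le> real Q" by linarith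
  have "24 * real n * (T + 2) \<le> (T + 2) * (1 + 24 * real n / gap) * gap"
    using T0 gap0 by (simp add: field_simps)
  also have "\<dots> \<le> real Q * gap" using Q_ceil gap0 by (intro mult_right_mono) auto
  finally have Q_fine: "24 * real n * (T + 2) \<le> real Q * Vlow n (cos_mode n) * (sqrt \<epsilon> - \<epsilon>)"
    unfolding gap_def by (simp add: mult.assoc)
  note bound = slow_schedule_lower_bound[OF n B \<eta> \<epsilon>, of Q, folded T_def x0_def, OF Q_ge Q_fine]
  show ?thesis
  proof (intro exI[of _ "slow_schedule n \<eta> B"] exI[of _ Q] exI[of _ x0] conjI allI impI)
    show "0 < Q" using Q_ge T0 by linarith
    show "\<exists>m::int. x0 i = real_of_int m / real Q" for i
      unfolding x0_def floorQ_def by blast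
    show "doubly_stochastic n (slow_schedule n \<eta> B k)" for k
      using slow_schedule_props(1)[OF n2 \<eta>(1) _ B] \<eta> by simp
    show "0 < slow_schedule n \<eta> B k i i" for k i
      using slow_schedule_props(2)[OF n2 \<eta>(1) _ B] \<eta> by simp
    show "\<eta> \<le> slow_schedule n \<eta> B k i j" if "0 < slow_schedule n \<eta> B k i j" for k i j
      using slow_schedule_props(3)[OF n2 \<eta>(1) _ B] \<eta> that by simp
    show "strongly_connected n (\<Union>t\<in>{k*B..<(k+1)*B}. edges n (slow_schedule n \<eta> B t))" for k
      using slow_schedule_props(4)[OF n2 \<eta>(1) _ B] \<eta> by simp
    show "0 < Vlow n x0" by (rule bound(1))
    show "1/400 * (real n)\<^sup>2 / \<eta> * real B * ln (1/\<epsilon>) \<le> real k"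
      if "Vlow n (traj n Q (slow_schedule n \<eta> B) x0 k) / Vlow n x0 \<le> \<epsilon>" for k
      using that bound unfolding T_def by (simp add: pos_divide_le_eq)
  qed
qed

theorem proposition6:
  shows "\<exists>(c::real) > 0. \<exists>n0::nat.
    \<forall>(B::nat) (\<eta>::real) (\<epsilon>::real) (n::nat).
      B \<ge> 1 \<longrightarrow> 0 < \<eta> \<longrightarrow> \<eta> < 1/2 \<longrightarrow> 0 < \<epsilon> \<longrightarrow> \<epsilon> < 1 \<longrightarrow> n \<ge> n0 \<longrightarrow>
      (\<exists>(A::nat \<Rightarrow> nat \<Rightarrow> nat \<Rightarrow> real) (Q::nat) (x0::nat \<Rightarrow> real).
         Q > 0 \<and>
         (\<forall>i<n. \<exists>m::int. x0 i = real_of_int m / real Q) \<and>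
         (\<forall>k. doubly_stochastic n (A k)) \<and>
         (\<forall>k. \<forall>i<n. A k i i > 0) \<and>
         (\<forall>k. \<forall>i<n. \<forall>j<n. A k i j > 0 \<longrightarrow> A k i j \<ge> \<eta>) \<and>
         (\<forall>k. strongly_connected n (\<Union>t\<in>{k*B..<(k+1)*B}. edges n (A t))) \<and>
         Vlow n x0 > 0 \<and>
         (\<forall>k. Vlow n (traj n Q A x0 k) / Vlow n x0 \<le> \<epsilon> \<longrightarrow>
              real k \<ge> c * (real n)\<^sup>2 / \<eta> * real B * ln (1/\<epsilon>)))"
  by (intro exI[of _ "1/400"] conjI exI[of _ 10] allI impI slow_instance) simp_all

end
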